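(* Let $(X,\rho)$ be a complete separable metric space, $T>0$, and let $\xi_t$, $t\in[0,T]$, be a strong Markov process with values in $X$ and càdlàg paths, belonging to the class $\mathcal{M}(\beta,\gamma)$ (with $\beta\ge1$, $\gamma>0$) with constants $a_0>0$, $K>0$. Let $r_1$ be the largest integer less than or equal to $-(\log_2 a_0+3)$, let $r$ be an integer with $r>r_1$, and let $T_r=\min\{((M_{r+2}\wedge a_0)^\gamma/(2K))^{1/\beta},T,1\}$. Then $$E Y_r\le\begin{cases}4T_r^{-1}e^T, & \text{if } T_r<1,\\ 1.95\,e^T, & \text{if } T_r=1.\end{cases}$$
   Context: $\alpha(h,a)=\sup\{P_{s,t}(x,\{y:\rho(x,y)\ge a\}) : x\in X,\ 0\le s\le t\le (s+h)\wedge T\}$, where $P_{s,t}$ is the transition function of $\xi$. Class $\mathcal{M}(\beta,\gamma)$ with constants $a_0,K$: $\alpha(h,a)\le K h^\beta/a^\gamma$ for all $h\in[0,T]$, $a\in(0,a_0]$. $M_r=2^{-r-1}$. For a partition $\kappa=\{0=t_0<t_1<\dots<t_{m_\kappa}=T\}$ of $[0,T]$ let $\xi_{k,\kappa}=\rho(\xi_{t_k},\xi_{t_{k-1}})$ and $K_r(\omega,\kappa)=\{k:1\le k\le m_\kappa,\ M_r\le \xi_{k,\kappa}(\omega)<M_{r-1}\}$. Then $Y_r(\omega)=\sup_\kappa \#K_r(\omega,\kappa)$, the supremum over all finite point partitions $\kappa$ of $[0,T]$. *)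

theory Defs
  imports "HOL-Analysis.Analysis" "HOL-Probability.Probability"
begin

definition Mr :: "int \<Rightarrow> real" where
  "Mr r = 2 powr (- real_of_int r - 1)"

definition transition_function ::
  "real \<Rightarrow> (real \<Rightarrow> real \<Rightarrow> 'a::topological_space \<Rightarrow> 'a measure) \<Rightarrow> bool" where
  "transition_function T P \<longleftrightarrow>
     (\<forall>s t x. 0 \<le> s \<and> s \<le> t \<and> t \<le> T \<longrightarrow>
        prob_space (P s t x) \<and> sets (P s t x) = sets borel) \<and>
     (\<forall>s t A. 0 \<le> s \<and> s \<le> t \<and> t \<le> T \<and> A \<in> sets borel \<longrightarrow>
        (\<lambda>x. emeasure (P s t x) A) \<in> borel_measurable borel) \<and>
     (\<forall>s x A. 0 \<le> s \<and> s \<le> T \<and> A \<in> sets borel \<longrightarrow>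
        emeasure (P s s x) A = indicator A x) \<and>
     (\<forall>s t u x A. 0 \<le> s \<and> s \<le> t \<and> t \<le> u \<and> u \<le> T \<and> A \<in> sets borel \<longrightarrow>
        emeasure (P s u x) A = (\<integral>\<^sup>+ y. emeasure (P t u y) A \<partial>P s t x))"

text \<open>Strong Markov process on [0,T] w.r.t. the filtration F with transition function P:
  xi is adapted, and for every stopping time tau with values in [0,T], every h \<ge> 0,
  Borel A and B in the sigma-algebra F_tau:
  P(xi_{tau+h} \<in> A, tau+h \<le> T, B) = E[ P_{tau,tau+h}(xi_tau, A); tau+h \<le> T, B ],
  i.e. P(xi_{tau+h} \<in> A | F_tau) = P_{tau,tau+h}(xi_tau, A) a.s. on {tau+h \<le> T}.\<close>
definition strong_markov ::
  "'b measure \<Rightarrow> (real \<Rightarrow> 'b measure) \<Rightarrow> real \<Rightarrow> (real \<Rightarrow> 'b \<Rightarrow> 'a::topological_space)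
     \<Rightarrow> (real \<Rightarrow> real \<Rightarrow> 'a \<Rightarrow> 'a measure) \<Rightarrow> bool" where
  "strong_markov M F T \<xi> P \<longleftrightarrow>
     filtration (space M) F \<and> (\<forall>t. sets (F t) \<subseteq> sets M) \<and>
     transition_function T P \<and>
     (\<forall>t\<in>{0..T}. \<xi> t \<in> borel_measurable (F t)) \<and>
     (\<forall>\<tau> h A B. stopping_time F \<tau> \<and> (\<forall>\<omega>\<in>space M. 0 \<le> \<tau> \<omega> \<and> \<tau> \<omega> \<le> T) \<and> 0 \<le> h \<and>
        A \<in> sets borel \<and> B \<in> sets (filtration.pre_sigma (space M) F \<tau>) \<longrightarrow>
        emeasure M {\<omega> \<in> B. \<tau> \<omega> + h \<le> T \<and> \<xi> (\<tau> \<omega> + h) \<omega> \<in> A} =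
        (\<integral>\<^sup>+ \<omega>. indicator {\<omega> \<in> B. \<tau> \<omega> + h \<le> T} \<omega> *
                 emeasure (P (\<tau> \<omega>) (\<tau> \<omega> + h) (\<xi> (\<tau> \<omega>) \<omega>)) A \<partial>M))"

definition cadlag_paths :: "'b measure \<Rightarrow> real \<Rightarrow> (real \<Rightarrow> 'b \<Rightarrow> 'a::topological_space) \<Rightarrow> bool" where
  "cadlag_paths M T \<xi> \<longleftrightarrow>
     (\<forall>\<omega>\<in>space M.
        (\<forall>t\<in>{0..<T}. continuous (at_right t) (\<lambda>s. \<xi> s \<omega>)) \<and>
        (\<forall>t\<in>{0<..T}. \<exists>l. ((\<lambda>s. \<xi> s \<omega>) \<longlongrightarrow> l) (at_left t)))"

definition alpha ::
  "real \<Rightarrow> (real \<Rightarrow> real \<Rightarrow> 'a::metric_space \<Rightarrow> 'a measure) \<Rightarrow> real \<Rightarrow> real \<Rightarrow> real" where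
  "alpha T P h a = (SUP (x, s, t) \<in> {(x, s, t). 0 \<le> s \<and> s \<le> t \<and> t \<le> min (s + h) T}.
                       measure (P s t x) {y. dist x y \<ge> a})"

definition class_M ::
  "real \<Rightarrow> (real \<Rightarrow> real \<Rightarrow> 'a::metric_space \<Rightarrow> 'a measure) \<Rightarrow> real \<Rightarrow> real \<Rightarrow> real \<Rightarrow> real \<Rightarrow> bool" where
  "class_M T P \<beta> \<gamma> a0 K \<longleftrightarrow>
     (\<forall>h\<in>{0..T}. \<forall>a\<in>{0<..a0}. alpha T P h a \<le> K * h powr \<beta> / a powr \<gamma>)"

definition partitions :: "real \<Rightarrow> (nat \<times> (nat \<Rightarrow> real)) set" where
  "partitions T = {(m, t). t 0 = 0 \<and> t m = T \<and> (\<forall>k<m. t k < t (Suc k))}"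

definition Kset :: "(real \<Rightarrow> 'b \<Rightarrow> 'a::metric_space) \<Rightarrow> int \<Rightarrow> 'b \<Rightarrow> nat \<times> (nat \<Rightarrow> real) \<Rightarrow> nat set" where
  "Kset \<xi> r \<omega> \<kappa> = {k. 1 \<le> k \<and> k \<le> fst \<kappa> \<and>
      Mr r \<le> dist (\<xi> (snd \<kappa> k) \<omega>) (\<xi> (snd \<kappa> (k - 1)) \<omega>) \<and>
      dist (\<xi> (snd \<kappa> k) \<omega>) (\<xi> (snd \<kappa> (k - 1)) \<omega>) < Mr (r - 1)}"

definition Y :: "real \<Rightarrow> (real \<Rightarrow> 'b \<Rightarrow> 'a::metric_space) \<Rightarrow> int \<Rightarrow> 'b \<Rightarrow> ennreal" where
  "Y T \<xi> r \<omega> = (SUP \<kappa> \<in> partitions T. of_nat (card (Kset \<xi> r \<omega> \<kappa>)))"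

end

theory Submission
  imports Defs
begin

text \<open>Sample the path on the grid of mesh T/N and follow the successive grid indices at which
  it has moved at least b = 2c away from its value at the previous such index. By
  right-continuity, every increment of size at least M_r of a fixed partition forces one of
  these exits once N is large, so Y_r is bounded by the liminf of the number of exits, and
  Fatou's lemma reduces the theorem to bounding the expected number of exits.

  By the Markov property at the previous exit and an Ottaviani-type maximal inequality, the
  next exit occurs within time h with conditional probability at most a/(1 - a), where
  a bounds alpha(h, c') for a radius c' < c. Splitting exp(-(time to the next exit)) along
  time levels h_1 \<le> ... \<le> h_n gives E[exp(-(t_(k+1) - t_k)) | F_(t_k)] \<le> q, hence
  P(t_k \<le> T) \<le> e^T q^k and E Y_r \<le> e^T q / (1 - q). In the class M(beta, gamma), alpha(h, c')
  is at most linear in h on [0, T_r]; one level for T_r < 1 and three levels for T_r = 1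
  give the constants 4 / T_r and 1.95.\<close>

section \<open>Successive exits of a sequence\<close>

lemma strict_mono_on_atMostI:
  fixes f :: "nat \<Rightarrow> 'a::order"
  assumes "\<And>k. k < m \<Longrightarrow> f k < f (Suc k)"
  shows "strict_mono_on {..m} f"
proof (rule strict_mono_onI)
  fix i j assume "i \<in> {..m}" "j \<in> {..m}" "i < j"
  then show "f i < f j"
  proof (induction j)
    case (Suc j)
    then show ?case using assms[of j] by (cases "i = j") (auto intro: less_trans)
  qed simp
qed

text \<open>The value Suc N signals that the sequence stays within distance b of its value at i
  up to index N.\<close>
definition first_exit :: "(nat \<Rightarrow> 'a::metric_space) \<Rightarrow> nat \<Rightarrow> real \<Rightarrow> nat \<Rightarrow> nat" where
  "first_exit x N b i = Min (insert (Suc N) {j \<in> {i<..N}. b \<le> dist (x j) (x i)})"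

primrec exit_index :: "(nat \<Rightarrow> 'a::metric_space) \<Rightarrow> nat \<Rightarrow> real \<Rightarrow> nat \<Rightarrow> nat" where
  "exit_index x N b 0 = 0"
| "exit_index x N b (Suc k) = first_exit x N b (exit_index x N b k)"

lemma first_exit_le_Suc: "first_exit x N b i \<le> Suc N"
  unfolding first_exit_def by (rule Min_le) auto

lemma first_exit_beyond: "N < i \<Longrightarrow> first_exit x N b i = Suc N"
  unfolding first_exit_def by simp

lemma less_first_exit: "i \<le> N \<Longrightarrow> i < first_exit x N b i"
  unfolding first_exit_def by (subst Min_gr_iff) auto

lemma first_exit_le_imp_less: "first_exit x N b i \<le> N \<Longrightarrow> i < first_exit x N b i"
  using less_first_exit first_exit_beyond by (metis Suc_n_not_le_n not_le)

lemma dist_before_first_exit: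
  assumes "i < l" "l < first_exit x N b i"
  shows "dist (x l) (x i) < b"
proof (rule ccontr)
  assume "\<not> ?thesis"
  with assms first_exit_le_Suc[of x N b i] have "first_exit x N b i \<le> l"
    unfolding first_exit_def by (intro Min_le) auto
  with assms(2) show False by simp
qed

lemma first_exit_eq_iff:
  assumes "i < j" "j \<le> N"
  shows "first_exit x N b i = j \<longleftrightarrow>
           b \<le> dist (x j) (x i) \<and> (\<forall>l\<in>{i<..<j}. dist (x l) (x i) < b)"
proof
  assume j: "first_exit x N b i = j"
  have "j \<in> insert (Suc N) {j \<in> {i<..N}. b \<le> dist (x j) (x i)}"
    unfolding j[symmetric] first_exit_def by (rule Min_in) auto
  then show "b \<le> dist (x j) (x i) \<and> (\<forall>l\<in>{i<..<j}. dist (x l) (x i) < b)"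
    using assms dist_before_first_exit[of i _ x N b] j by auto
next
  assume "b \<le> dist (x j) (x i) \<and> (\<forall>l\<in>{i<..<j}. dist (x l) (x i) < b)"
  then show "first_exit x N b i = j"
    using assms unfolding first_exit_def
    by (intro Min_eqI) (auto simp: not_le[symmetric])
qed

lemma le_exit_index: "exit_index x N b k \<le> N \<Longrightarrow> k \<le> exit_index x N b k"
proof (induction k)
  case (Suc k)
  then have "exit_index x N b k < exit_index x N b (Suc k)"
    using first_exit_le_imp_less by simp
  with Suc show ?case by simp
qed simp

text \<open>A displacement of at least 2b between two sample indices u < v forces one of the
  successive b-exits to land in (u, v]: otherwise the sample values at u and v both stay
  within b of the value at the last exit before u.\<close>
lemma exit_index_between:
  assumes b: "0 < b" and uv: "u < v" "v \<le> N" and d: "2 * b \<le> dist (x v) (x u)"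
  shows "\<exists>l>0. u < exit_index x N b l \<and> exit_index x N b l \<le> v"
proof -
  let ?I = "exit_index x N b"
  define L where "L = {l. ?I l \<le> u}"
  have "L \<subseteq> {..u}"
  proof
    fix l assume "l \<in> L"
    then have "?I l \<le> u" by (simp add: L_def)
    with uv le_exit_index[of x N b l] show "l \<in> {..u}" by simp
  qed
  then have "finite L" by (rule finite_subset) simp
  moreover have "0 \<in> L" by (simp add: L_def)
  ultimately have l0: "Max L \<in> L" "Suc (Max L) \<notin> L"
    by (auto intro: Max_in dest: Max_ge)
  then have i: "?I (Max L) \<le> u" and next_gt: "u < ?I (Suc (Max L))"
    by (auto simp: L_def)
  show ?thesis
  proof (cases "?I (Suc (Max L)) \<le> v")
    case True
    with next_gt show ?thesis by blast
  next
    case False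
    then have "v < first_exit x N b (?I (Max L))" by simp
    then have "dist (x l) (x (?I (Max L))) < b" if "?I (Max L) < l" "l \<le> v" for l
      using that by (intro dist_before_first_exit[where N = N]) auto
    then have "dist (x v) (x (?I (Max L))) < b" "dist (x u) (x (?I (Max L))) < b"
      using i uv b by (auto simp: le_less)
    with d dist_triangle2[of "x v" "x u" "x (?I (Max L))"] show ?thesis by simp
  qed
qed

lemma card_le_exit_count:
  fixes J :: "nat \<Rightarrow> nat"
  assumes b: "0 < b" and J: "strict_mono_on {..m} J" "J m \<le> N" and S: "S \<subseteq> {1..m}"
    and far: "\<And>k. k \<in> S \<Longrightarrow> 2 * b \<le> dist (x (J k)) (x (J (k - 1)))"
  shows "card S \<le> card {l \<in> {1..N}. exit_index x N b l \<le> N}"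
proof -
  let ?I = "exit_index x N b"
  have Jle: "J k \<le> N" if "k \<le> m" for k
    using J strict_mono_on_leD[OF J(1), of k m] that by auto
  have "\<exists>l>0. J (k - 1) < ?I l \<and> ?I l \<le> J k" if "k \<in> S" for k
  proof (rule exit_index_between[where x = x])
    show "0 < b" "2 * b \<le> dist (x (J k)) (x (J (k - 1)))" using b far[OF that] by auto
    have "1 \<le> k" "k \<le> m" using that S by auto
    then show "J (k - 1) < J k" "J k \<le> N"
      using strict_mono_onD[OF J(1), of "k - 1" k] Jle[of k] by auto
  qed
  then obtain L where L: "\<And>k. k \<in> S \<Longrightarrow> 0 < L k \<and> J (k - 1) < ?I (L k) \<and> ?I (L k) \<le> J k"
    by metis
  have "inj_on L S"
  proof (rule inj_onI, rule ccontr)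
    fix k k' assume kk: "k \<in> S" "k' \<in> S" "L k = L k'" "k \<noteq> k'"
    have "?I (L k) < ?I (L k')" if "k \<in> S" "k' \<in> S" "k < k'" for k k'
    proof -
      have "J k \<le> J (k' - 1)"
        using that S by (intro strict_mono_on_leD[OF J(1)]) auto
      with L[OF that(1)] L[OF that(2)] show ?thesis by simp
    qed
    with kk show False by (metis nat_neq_iff)
  qed
  moreover have "L ` S \<subseteq> {l \<in> {1..N}. ?I l \<le> N}"
  proof
    fix l assume "l \<in> L ` S"
    then obtain k where k: "k \<in> S" "l = L k" by blast
    then have "?I l \<le> N" using L[OF k(1)] Jle[of k] S by auto
    with k L[OF k(1)] le_exit_index[of x N b l] show "l \<in> {l \<in> {1..N}. ?I l \<le> N}" by auto
  qed
  ultimately show ?thesis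
    by (intro card_inj_on_le) auto
qed

section \<open>Approximating partitions by grids\<close>

definition grid :: "real \<Rightarrow> nat \<Rightarrow> nat \<Rightarrow> real" where
  "grid T N j = T * real j / real N"

definition grid_index :: "real \<Rightarrow> nat \<Rightarrow> real \<Rightarrow> nat" where
  "grid_index T N x = nat \<lceil>x * real N / T\<rceil>"

lemma grid_0 [simp]: "grid T N 0 = 0"
  by (simp add: grid_def)

lemma grid_nonneg: "0 \<le> T \<Longrightarrow> 0 \<le> grid T N j"
  by (simp add: grid_def)

lemma grid_mono: "0 \<le> T \<Longrightarrow> i \<le> j \<Longrightarrow> grid T N i \<le> grid T N j"
  by (simp add: grid_def divide_right_mono mult_left_mono)

lemma grid_le: "0 \<le> T \<Longrightarrow> j \<le> N \<Longrightarrow> grid T N j \<le> T"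
  by (cases "N = 0") (simp_all add: grid_def field_simps mult_left_mono)

lemma grid_diff_nonneg: "0 \<le> T \<Longrightarrow> i \<le> j \<Longrightarrow> 0 \<le> grid T N j - grid T N i"
  using grid_mono by simp

lemma grid_index_bounds:
  assumes T: "0 < T" and N: "0 < N" and x: "0 \<le> x" "x \<le> T"
  shows "x \<le> grid T N (grid_index T N x)" "grid T N (grid_index T N x) < x + T / real N"
    and "grid_index T N x \<le> N"
proof -
  have idx: "real (grid_index T N x) = real_of_int \<lceil>x * real N / T\<rceil>"
    using x T by (simp add: grid_index_def)
  have "x * real N / T \<le> real (grid_index T N x)" "real (grid_index T N x) < x * real N / T + 1"
    unfolding idx by linarith+
  with T N show "x \<le> grid T N (grid_index T N x)" "grid T N (grid_index T N x) < x + T / real N"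
    by (simp_all add: grid_def field_simps)
  have "x * real N / T \<le> real N"
    using x T by (simp add: field_simps mult_right_mono)
  then show "grid_index T N x \<le> N"
    unfolding grid_index_def by (simp add: ceiling_le_iff nat_le_iff)
qed

lemma eventually_grid_mesh_less: "0 < \<delta> \<Longrightarrow> eventually (\<lambda>N. T / real N < \<delta>) sequentially"
  by (rule order_tendstoD(2)[OF lim_const_over_n])

lemma eventually_grid_index_less:
  assumes T: "0 < T" and xy: "0 \<le> x" "x < y" "y \<le> T"
  shows "eventually (\<lambda>N. grid_index T N x < grid_index T N y) sequentially"
proof -
  have "0 < y - x" using xy by simp
  from eventually_grid_mesh_less[OF this, of T] eventually_gt_at_top[of 0]
  show ?thesis
  proof eventually_elim
    case (elim N)
    with T xy have "grid T N (grid_index T N x) < grid T N (grid_index T N y)"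
      using grid_index_bounds[of T N x] grid_index_bounds[of T N y] by force
    with T show ?case
      using grid_mono[of T "grid_index T N y" "grid_index T N x" N] by (meson less_le_not_le nat_le_linear)
  qed
qed

lemma eventually_dist_grid_index_less:
  fixes f :: "real \<Rightarrow> 'a::metric_space"
  assumes T: "0 < T" and x: "0 \<le> x" "x \<le> T" and \<eta>: "0 < \<eta>"
    and rc: "x < T \<Longrightarrow> continuous (at_right x) f"
  shows "eventually (\<lambda>N. dist (f (grid T N (grid_index T N x))) (f x) < \<eta>) sequentially"
proof (cases "x < T")
  case True
  then have "(f \<longlongrightarrow> f x) (at_right x)"
    using rc by (simp add: continuous_within)
  then have "eventually (\<lambda>s. dist (f s) (f x) < \<eta>) (at_right x)"
    using \<eta> by (rule tendstoD)
  then obtain d where d: "x < d" "\<And>s. x < s \<Longrightarrow> s < d \<Longrightarrow> dist (f s) (f x) < \<eta>"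
    unfolding eventually_at_right_field by blast
  have "0 < d - x" using d by simp
  from eventually_grid_mesh_less[OF this, of T] eventually_gt_at_top[of 0]
  show ?thesis
  proof eventually_elim
    case (elim N)
    with grid_index_bounds[OF T _ x, of N] d \<eta> show ?case
      by (cases "grid T N (grid_index T N x) = x") auto
  qed
next
  case False
  then have "x = T" using x by simp
  show ?thesis
    using eventually_gt_at_top[of 0]
  proof eventually_elim
    case (elim N)
    with T \<open>x = T\<close> \<eta> show ?case by (simp add: grid_index_def grid_def)
  qed
qed

lemma partitionsD:
  assumes "(m, t) \<in> partitions T"
  shows "strict_mono_on {..m} t" "t 0 = 0" "t m = T" "k \<le> m \<Longrightarrow> 0 \<le> t k" "k \<le> m \<Longrightarrow> t k \<le> T"
proof -
  show mono: "strict_mono_on {..m} t" "t 0 = 0" "t m = T"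
    using assms by (auto simp: partitions_def intro: strict_mono_on_atMostI)
  show "k \<le> m \<Longrightarrow> 0 \<le> t k" "k \<le> m \<Longrightarrow> t k \<le> T"
    using strict_mono_on_leD[OF mono(1), of 0 k] strict_mono_on_leD[OF mono(1), of k m] mono by auto
qed

text \<open>Grid points approximate the partition points from the right; right-continuity then
  turns each increment of size at least M_r into a grid increment of size at least 2b.\<close>
lemma eventually_card_Kset_le_exit_count:
  fixes \<xi> :: "real \<Rightarrow> 'b \<Rightarrow> 'a::metric_space"
  assumes T: "0 < T" and rc: "\<And>s. 0 \<le> s \<Longrightarrow> s < T \<Longrightarrow> continuous (at_right s) (\<lambda>s. \<xi> s \<omega>)"
    and b: "0 < b" "2 * b < Mr r" and \<kappa>: "\<kappa> \<in> partitions T"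
  shows "eventually (\<lambda>N. card (Kset \<xi> r \<omega> \<kappa>) \<le>
           card {l \<in> {1..N}. exit_index (\<lambda>j. \<xi> (grid T N j) \<omega>) N b l \<le> N}) sequentially"
proof -
  obtain m t where \<kappa>_eq: "\<kappa> = (m, t)" by fastforce
  note t = partitionsD[OF \<kappa>[unfolded \<kappa>_eq]]
  define \<eta> where "\<eta> = (Mr r - 2 * b) / 2"
  have \<eta>: "0 < \<eta>" using b by (simp add: \<eta>_def)
  let ?J = "\<lambda>N k. grid_index T N (t k)"
  have "eventually (\<lambda>N. \<forall>k\<in>{..<m}. ?J N k < ?J N (Suc k)) sequentially"
    using t by (intro eventually_ball_finite ballI eventually_grid_index_less T)
      (auto intro: strict_mono_onD)
  moreover have "eventually (\<lambda>N. \<forall>k\<in>{..m}. dist (\<xi> (grid T N (?J N k)) \<omega>) (\<xi> (t k) \<omega>) < \<eta>) sequentially"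
    using t by (intro eventually_ball_finite ballI eventually_dist_grid_index_less T \<eta> rc) auto
  ultimately show ?thesis
    using eventually_gt_at_top[of 0]
  proof eventually_elim
    case (elim N)
    let ?x = "\<lambda>j. \<xi> (grid T N j) \<omega>"
    show ?case
    proof (rule card_le_exit_count[OF b(1)])
      show "strict_mono_on {..m} (?J N)" "?J N m \<le> N"
        using elim t grid_index_bounds[OF T, of N "t m"] by (auto intro: strict_mono_on_atMostI)
      show "Kset \<xi> r \<omega> \<kappa> \<subseteq> {1..m}"
        by (auto simp: Kset_def \<kappa>_eq)
      fix k assume "k \<in> Kset \<xi> r \<omega> \<kappa>"
      then have k: "1 \<le> k" "k \<le> m" "Mr r \<le> dist (\<xi> (t k) \<omega>) (\<xi> (t (k - 1)) \<omega>)"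
        by (auto simp: Kset_def \<kappa>_eq)
      have "dist (\<xi> (t k) \<omega>) (?x (?J N k)) < \<eta>"
        "dist (?x (?J N (k - 1))) (\<xi> (t (k - 1)) \<omega>) < \<eta>"
        using elim k(2) by (simp_all add: dist_commute)
      with k(3) dist_triangle[of "\<xi> (t k) \<omega>" "\<xi> (t (k - 1)) \<omega>" "?x (?J N k)"]
        dist_triangle[of "?x (?J N k)" "\<xi> (t (k - 1)) \<omega>" "?x (?J N (k - 1))"]
      have "Mr r - 2 * \<eta> < dist (?x (?J N k)) (?x (?J N (k - 1)))"
        by linarith
      then show "2 * b \<le> dist (?x (?J N k)) (?x (?J N (k - 1)))"
        by (simp add: \<eta>_def field_simps)
    qed
  qed
qed

section \<open>The staircase bound\<close>

lemma exp_neg_le_staircase: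
  fixes h :: "nat \<Rightarrow> real"
  assumes h: "h 0 = 0" "mono h" and \<sigma>: "0 \<le> \<sigma>"
  shows "exp (- \<sigma>) \<le> exp (- h n) + (\<Sum>l<n. (exp (- h l) - exp (- h (Suc l))) * of_bool (\<sigma> \<le> h (Suc l)))"
proof (induction n)
  case 0
  show ?case using h \<sigma> by simp
next
  case (Suc n)
  show ?case
  proof (cases "\<sigma> \<le> h (Suc n)")
    case True
    with Suc show ?thesis by simp
  next
    case False
    have "0 \<le> exp (- h l) - exp (- h (Suc l))" for l
      using monoD[OF h(2), of l "Suc l"] by simp
    then have "0 \<le> (\<Sum>l<Suc n. (exp (- h l) - exp (- h (Suc l))) * of_bool (\<sigma> \<le> h (Suc l)))"
      by (intro sum_nonneg mult_nonneg_nonneg) auto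
    moreover have "exp (- \<sigma>) \<le> exp (- h (Suc n))" using False by simp
    ultimately show ?thesis by linarith
  qed
qed

lemma sum_power_atLeast1_le:
  fixes q :: real
  assumes "0 \<le> q" "q < 1"
  shows "(\<Sum>l\<in>{1..n}. q ^ l) \<le> q / (1 - q)"
proof -
  have "(\<Sum>l<n. q ^ l) = (1 - q ^ n) / (1 - q)"
    using geometric_sum[of q n] assms by (simp add: field_simps)
  then have "(\<Sum>l\<in>{1..n}. q ^ l) = q * ((1 - q ^ n) / (1 - q))"
    by (simp add: sum.atLeast1_atMost_eq sum_distrib_left[symmetric])
  also have "\<dots> \<le> q * (1 / (1 - q))"
    using assms by (intro mult_left_mono divide_right_mono) auto
  finally show ?thesis by simp
qed

text \<open>Bound for the Laplace transform of the time to the next exit: exp(-s) is dominated by a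
  step function with jumps at the time levels h l, and \<alpha> l / (1 - \<alpha> l) bounds the
  probability of exiting within time h l.\<close>
definition staircase_bound :: "nat \<Rightarrow> (nat \<Rightarrow> real) \<Rightarrow> (nat \<Rightarrow> real) \<Rightarrow> real" where
  "staircase_bound n h \<alpha> =
     exp (- h n) + (\<Sum>l<n. (exp (- h l) - exp (- h (Suc l))) * (\<alpha> (Suc l) / (1 - \<alpha> (Suc l))))"

lemma staircase_bound_one_level:
  fixes \<delta> :: real
  assumes \<delta>: "0 < \<delta>" "\<delta> \<le> 1"
  defines "q \<equiv> staircase_bound 1 (\<lambda>l. real l * \<delta> / 2) (\<lambda>_. 21 / 80)"
  shows "q < 1" "q / (1 - q) \<le> 4 / \<delta>"
proof -
  define E where "E = exp (\<delta> / 2)"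
  define y where "y = E - 1"
  have y: "\<delta> / 2 + (\<delta> / 2)\<^sup>2 / 2 \<le> y"
    using exp_lower_Taylor_quadratic[of "\<delta> / 2"] \<delta> by (simp add: y_def E_def)
  moreover have "0 \<le> (\<delta> / 2)\<^sup>2 / 2" by simp
  ultimately have "0 < y" using \<delta> by linarith
  have "q = 1 / E + (1 - 1 / E) * (21 / 59)"
    unfolding q_def staircase_bound_def E_def by (simp add: exp_minus inverse_eq_divide)
  then have q: "q = (1 + y * (21 / 59)) / E" "1 - q = y * (38 / 59) / E"
    using \<open>0 < y\<close> unfolding y_def by (simp_all add: field_simps)
  have "0 < 1 - q" unfolding q(2) using \<open>0 < y\<close> by (simp add: E_def)
  then show "q < 1" by simp
  \<comment> \<open>q / (1 - q) \<le> 4 / \<delta> amounts to \<delta> (59 + 21 y) \<le> 152 y\<close>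
  have "\<delta> \<le> (\<delta> / 2 + (\<delta> / 2)\<^sup>2 / 2) * ((152 - 21 * \<delta>) / 59)"
  proof -
    have "\<delta> ^ 3 \<le> \<delta>\<^sup>2" using \<delta> by (simp add: power2_eq_square power3_eq_cube mult_left_le)
    then have "0 \<le> 17 * \<delta> + 17 / 2 * \<delta>\<^sup>2 - 21 / 8 * \<delta> ^ 3"
      using \<delta> zero_le_power2[of \<delta>] by linarith
    then have "0 \<le> (17 * \<delta> + 17 / 2 * \<delta>\<^sup>2 - 21 / 8 * \<delta> ^ 3) / 59" by simp
    moreover have "(\<delta> / 2 + (\<delta> / 2)\<^sup>2 / 2) * ((152 - 21 * \<delta>) / 59)
        = \<delta> + (17 * \<delta> + 17 / 2 * \<delta>\<^sup>2 - 21 / 8 * \<delta> ^ 3) / 59"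
      by (simp add: field_simps power2_eq_square power3_eq_cube)
    ultimately show ?thesis by linarith
  qed
  also have "\<dots> \<le> y * ((152 - 21 * \<delta>) / 59)"
    using y \<delta> by (intro mult_right_mono) auto
  finally have "\<delta> * (1 + y * (21 / 59)) / E \<le> 4 * (y * (38 / 59)) / E"
    using \<open>0 < y\<close> by (intro divide_right_mono) (auto simp: y_def field_simps)
  moreover have "q * \<delta> = \<delta> * (1 + y * (21 / 59)) / E" by (subst q(1)) simp
  moreover have "4 * (1 - q) = 4 * (y * (38 / 59)) / E" by (subst q(2)) simp
  ultimately have "q * \<delta> \<le> 4 * (1 - q)" by simp
  then show "q / (1 - q) \<le> 4 / \<delta>"
    using \<open>q < 1\<close> \<delta> by (simp add: field_simps)
qed

lemma staircase_bound_three_levels: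
  defines "q \<equiv> staircase_bound 3 (\<lambda>l. real l / 4) (\<lambda>l. 21 * real l / 160)"
  shows "q < 1" "q / (1 - q) \<le> 195 / 100"
proof -
  define x where "x = exp (- (1 / 4) :: real)"
  have powers: "exp (- (1 / 2)) = x ^ 2" "exp (- (3 / 4)) = x ^ 3"
    unfolding x_def by (simp_all add: power2_eq_square power3_eq_cube exp_add[symmetric])
  have "41 / 32 \<le> exp (1 / 4 :: real)"
    using exp_lower_Taylor_quadratic[of "1 / 4 :: real"] by (simp add: power2_eq_square)
  then have x: "0 < x" "x \<le> 32 / 41"
    unfolding x_def by (simp_all add: exp_minus field_simps)
  have "x ^ 2 \<le> (32 / 41) ^ 2" "x ^ 3 \<le> (32 / 41) ^ 3"
    using x by (intro power_mono; simp)+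
  then have x23: "x ^ 2 \<le> 1024 / 1681" "x ^ 3 \<le> 32768 / 68921"
    by (simp_all add: power2_eq_square power3_eq_cube)
  have "q = 34 / 97 * x ^ 3 + (63 / 97 - 21 / 59) * x ^ 2 + (21 / 59 - 21 / 139) * x + 21 / 139"
    unfolding q_def staircase_bound_def
    by (simp add: numeral_3_eq_3 lessThan_Suc x_def[symmetric] powers field_simps)
  also have "\<dots> \<le> 34 / 97 * (32768 / 68921) + (63 / 97 - 21 / 59) * (1024 / 1681) + (21 / 59 - 21 / 139) * (32 / 41) + 21 / 139"
    using x x23 by (intro add_mono mult_left_mono) auto
  also have "\<dots> \<le> 39 / 59" by simp
  \<comment> \<open>q \<le> 39/59 is equivalent to q / (1 - q) \<le> 39/20\<close>
  finally show "q < 1" "q / (1 - q) \<le> 195 / 100"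
    by (simp_all add: field_simps)
qed

section \<open>Strong Markov processes sampled on a grid\<close>

lemma countable_borel_partition:
  assumes "0 < \<epsilon>"
  obtains d :: "nat \<Rightarrow> 'a::{metric_space, second_countable_topology}" and W :: "nat \<Rightarrow> 'a set"
  where "disjoint_family W" "(\<Union>i. W i) = UNIV" "\<And>i. W i \<in> sets borel" "\<And>i. W i \<subseteq> ball (d i) \<epsilon>"
proof -
  obtain D :: "'a set" where D: "countable D" "\<And>U. open U \<Longrightarrow> U \<noteq> {} \<Longrightarrow> \<exists>y\<in>D. y \<in> U"
    using countable_dense_exists by blast
  then have "D \<noteq> {}" by blast
  define d where "d = from_nat_into D"
  define V where "V i = ball (d i) \<epsilon>" for i
  have "x \<in> (\<Union>i. V i)" for x
  proof -
    obtain y where "y \<in> D" "y \<in> ball x \<epsilon>" using D(2)[of "ball x \<epsilon>"] assms by auto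
    then obtain i where "d i \<in> ball x \<epsilon>"
      using \<open>D \<noteq> {}\<close> D(1) by (metis d_def from_nat_into_surj)
    then show "x \<in> (\<Union>i. V i)" by (auto simp: V_def dist_commute)
  qed
  then have "(\<Union>i. disjointed V i) = UNIV" by (auto simp: UN_disjointed_eq)
  moreover have "range V \<subseteq> sets borel" by (auto simp: V_def)
  then have "disjointed V i \<in> sets borel" for i
    using sets.range_disjointed_sets[of V borel] by blast
  ultimately show ?thesis
    using disjointed_subset[of V] by (intro that[of "disjointed V" d]) (auto simp: V_def disjoint_family_disjointed)
qed

locale strong_markov_process = prob_space M
  for M :: "'b measure" +
  fixes F :: "real \<Rightarrow> 'b measure"
    and \<xi> :: "real \<Rightarrow> 'b \<Rightarrow> 'a::{metric_space, second_countable_topology}"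
    and P :: "real \<Rightarrow> real \<Rightarrow> 'a \<Rightarrow> 'a measure" and T :: real
  assumes T_pos: "0 < T" and strong_markov: "strong_markov M F T \<xi> P"
begin

lemma filtration: "filtration (space M) F"
  using strong_markov by (simp add: strong_markov_def)

lemma space_F [simp]: "space (F t) = space M"
  using filtration by (simp add: filtration_def)

lemma sets_F_mono: "s \<le> t \<Longrightarrow> sets (F s) \<subseteq> sets (F t)"
  using filtration by (simp add: filtration_def)

lemma sets_F_subset: "A \<in> sets (F t) \<Longrightarrow> A \<in> sets M"
  using strong_markov by (auto simp: strong_markov_def)

lemma prob_space_P: "0 \<le> s \<Longrightarrow> s \<le> t \<Longrightarrow> t \<le> T \<Longrightarrow> prob_space (P s t x)"
  and sets_P: "0 \<le> s \<Longrightarrow> s \<le> t \<Longrightarrow> t \<le> T \<Longrightarrow> sets (P s t x) = sets borel"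
  using strong_markov by (auto simp: strong_markov_def transition_function_def)

lemma measurable_\<xi>_F:
  assumes "0 \<le> t" "t \<le> u" "t \<le> T"
  shows "\<xi> t \<in> borel_measurable (F u)"
proof -
  have "\<xi> t \<in> borel_measurable (F t)"
    using strong_markov assms by (auto simp: strong_markov_def)
  moreover have "subalgebra (F u) (F t)"
    using sets_F_mono[OF assms(2)] by (simp add: subalgebra_def)
  ultimately show ?thesis
    by (rule measurable_from_subalg[rotated])
qed

lemma measurable_\<xi>: "0 \<le> t \<Longrightarrow> t \<le> T \<Longrightarrow> \<xi> t \<in> borel_measurable M"
  using measurable_\<xi>_F[of t t] sets_F_subset
  by (metis measurable_from_subalg order_refl space_F subalgebra_def subsetI)

lemma measure_le_alpha:
  assumes "0 \<le> s" "s \<le> t" "t \<le> T" "t - s \<le> h"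
  shows "measure (P s t x) {y. a \<le> dist x y} \<le> alpha T P h a"
  unfolding alpha_def
proof (rule cSUP_upper2[where x = "(x, s, t)"])
  show "bdd_above ((\<lambda>(x, s, t). measure (P s t x) {y. a \<le> dist x y}) `
      {(x, s, t). 0 \<le> s \<and> s \<le> t \<and> t \<le> min (s + h) T})"
    by (rule bdd_aboveI[where M = 1]) (auto intro: prob_space.prob_le_1 prob_space_P)
qed (use assms in auto)

lemma alpha_nonneg: "0 \<le> h \<Longrightarrow> 0 \<le> alpha T P h a"
  using measure_le_alpha[of 0 0 h undefined a] T_pos by (auto intro: order_trans[OF measure_nonneg])

lemma strong_markov_property:
  assumes "stopping_time F \<tau>" "\<And>\<omega>. \<omega> \<in> space M \<Longrightarrow> 0 \<le> \<tau> \<omega> \<and> \<tau> \<omega> \<le> T" "0 \<le> h"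
    and "A \<in> sets borel" "B \<in> sets (filtration.pre_sigma (space M) F \<tau>)"
  shows "emeasure M {\<omega> \<in> B. \<tau> \<omega> + h \<le> T \<and> \<xi> (\<tau> \<omega> + h) \<omega> \<in> A} =
    (\<integral>\<^sup>+ \<omega>. indicator {\<omega> \<in> B. \<tau> \<omega> + h \<le> T} \<omega> * emeasure (P (\<tau> \<omega>) (\<tau> \<omega> + h) (\<xi> (\<tau> \<omega>) \<omega>)) A \<partial>M)"
proof -
  have "\<forall>\<tau> h A B. stopping_time F \<tau> \<and> (\<forall>\<omega>\<in>space M. 0 \<le> \<tau> \<omega> \<and> \<tau> \<omega> \<le> T) \<and> 0 \<le> h \<and>
        A \<in> sets borel \<and> B \<in> sets (filtration.pre_sigma (space M) F \<tau>) \<longrightarrow>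
        emeasure M {\<omega> \<in> B. \<tau> \<omega> + h \<le> T \<and> \<xi> (\<tau> \<omega> + h) \<omega> \<in> A} =
        (\<integral>\<^sup>+ \<omega>. indicator {\<omega> \<in> B. \<tau> \<omega> + h \<le> T} \<omega> *
                 emeasure (P (\<tau> \<omega>) (\<tau> \<omega> + h) (\<xi> (\<tau> \<omega>) \<omega>)) A \<partial>M)"
    using strong_markov unfolding strong_markov_def by (elim conjE)
  with assms show ?thesis by blast
qed

lemma markov_fixed_time:
  assumes B: "B \<in> sets (F s)" and st: "0 \<le> s" "s \<le> u" "u \<le> T" and A: "A \<in> sets borel"
  shows "emeasure M {\<omega>\<in>B. \<xi> u \<omega> \<in> A} = (\<integral>\<^sup>+ \<omega>. indicator B \<omega> * emeasure (P s u (\<xi> s \<omega>)) A \<partial>M)"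
proof -
  interpret filtration "space M" F by (rule filtration)
  have "B \<in> sets (pre_sigma (\<lambda>_. s))"
  proof (rule sets_pre_sigmaI[OF stopping_time_const])
    show "{\<omega> \<in> B. s \<le> t} \<in> sets (F t)" for t
      using B sets_F_mono[of s t] by (cases "s \<le> t") auto
  qed
  from strong_markov_property[OF stopping_time_const _ _ A this, of "u - s"] st
  show ?thesis by simp
qed

lemma sets_Collect_\<xi>_F:
  assumes B: "B \<in> sets (F u)" and t: "0 \<le> t" "t \<le> u" "t \<le> T" and W: "W \<in> sets borel"
  shows "{\<omega>\<in>B. \<xi> t \<omega> \<in> W} \<in> sets (F u)"
proof -
  have "{\<omega>\<in>space (F u). \<xi> t \<omega> \<in> W} \<in> sets (F u)"
    using measurable_sets[OF measurable_\<xi>_F[OF t] W] by (simp add: vimage_def Int_def conj_commute)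
  moreover have "{\<omega>\<in>B. \<xi> t \<omega> \<in> W} = B \<inter> {\<omega>\<in>space (F u). \<xi> t \<omega> \<in> W}"
    using sets.sets_into_space[OF B] by auto
  ultimately show ?thesis using B by auto
qed

lemma sets_Collect_dist_ge:
  assumes A: "A \<in> sets M" and t: "0 \<le> t" "t \<le> T" "0 \<le> t'" "t' \<le> T"
  shows "{\<omega>\<in>A. c \<le> dist (\<xi> t \<omega>) (\<xi> t' \<omega>)} \<in> sets M"
proof -
  have [measurable]: "\<xi> t \<in> borel_measurable M" "\<xi> t' \<in> borel_measurable M"
    using t by (auto intro: measurable_\<xi>)
  have "{\<omega>\<in>space M. c \<le> dist (\<xi> t \<omega>) (\<xi> t' \<omega>)} \<in> sets M" by measurable
  moreover have "{\<omega>\<in>A. c \<le> dist (\<xi> t \<omega>) (\<xi> t' \<omega>)} = A \<inter> {\<omega>\<in>space M. c \<le> dist (\<xi> t \<omega>) (\<xi> t' \<omega>)}"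
    using sets.sets_into_space[OF A] by auto
  ultimately show ?thesis using A by auto
qed

lemma emeasure_leave_ball_le:
  assumes S: "S \<in> sets (F s)" and st: "0 \<le> s" "s \<le> u" "u \<le> T" "u - s \<le> h"
    and near: "\<And>\<omega>. \<omega> \<in> S \<Longrightarrow> dist (\<xi> s \<omega>) d < \<epsilon>" and \<alpha>: "alpha T P h c' \<le> \<alpha>"
  shows "emeasure M {\<omega>\<in>S. \<xi> u \<omega> \<in> {y. c' + \<epsilon> \<le> dist y d}} \<le> ennreal \<alpha> * emeasure M S"
proof -
  let ?A = "{y. c' + \<epsilon> \<le> dist y d}"
  have A: "?A \<in> sets borel"
    by (intro borel_closed closed_Collect_le continuous_intros)
  have "emeasure M {\<omega>\<in>S. \<xi> u \<omega> \<in> ?A} = (\<integral>\<^sup>+ \<omega>. indicator S \<omega> * emeasure (P s u (\<xi> s \<omega>)) ?A \<partial>M)"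
    by (rule markov_fixed_time[OF S st(1-3) A])
  also have "\<dots> \<le> (\<integral>\<^sup>+ \<omega>. ennreal \<alpha> * indicator S \<omega> \<partial>M)"
  proof (intro nn_integral_mono)
    fix \<omega>
    show "indicator S \<omega> * emeasure (P s u (\<xi> s \<omega>)) ?A \<le> ennreal \<alpha> * indicator S \<omega>"
    proof (cases "\<omega> \<in> S")
      case True
      let ?x = "\<xi> s \<omega>"
      interpret Px: prob_space "P s u ?x" using st by (intro prob_space_P) auto
      have "?A \<subseteq> {y. c' \<le> dist ?x y}"
      proof
        fix y assume "y \<in> ?A"
        with near[OF True] dist_triangle3[of y d ?x] show "y \<in> {y. c' \<le> dist ?x y}" by simp
      qed
      moreover have "{y. c' \<le> dist ?x y} \<in> sets (P s u ?x)"
        using st by (simp add: sets_P closed_Collect_le)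
      ultimately have "emeasure (P s u ?x) ?A \<le> measure (P s u ?x) {y. c' \<le> dist ?x y}"
        by (metis Px.emeasure_eq_measure emeasure_mono)
      also have "\<dots> \<le> \<alpha>"
        using measure_le_alpha[OF st, of ?x c'] \<alpha> by (intro ennreal_leI) simp
      finally show ?thesis using True by simp
    qed simp
  qed
  also have "\<dots> = ennreal \<alpha> * emeasure M S"
    by (rule nn_integral_cmult_indicator[OF sets_F_subset[OF S]])
  finally show ?thesis .
qed

text \<open>The kernel bound at radius c' < c controls displacements of size c: cover the state
  space by countably many Borel pieces of radius (c - c')/2 and apply the Markov property
  on each piece with a fixed target set.\<close>
lemma measure_displacement_le:
  assumes B: "B \<in> sets (F s)" and st: "0 \<le> s" "s \<le> u" "u \<le> T" "u - s \<le> h"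
    and c: "0 < c'" "c' < c" and \<alpha>: "alpha T P h c' \<le> \<alpha>"
  shows "measure M {\<omega>\<in>B. c \<le> dist (\<xi> u \<omega>) (\<xi> s \<omega>)} \<le> \<alpha> * measure M B"
proof -
  define \<epsilon> where "\<epsilon> = (c - c') / 2"
  have "0 < \<epsilon>" using c by (simp add: \<epsilon>_def)
  then obtain W and d :: "nat \<Rightarrow> 'a" where W: "disjoint_family W" "(\<Union>i. W i) = UNIV"
    "\<And>i. W i \<in> sets borel" "\<And>i. W i \<subseteq> ball (d i) \<epsilon>"
    by (rule countable_borel_partition) blast
  have "0 \<le> \<alpha>" using alpha_nonneg[of h c'] st \<alpha> by linarith
  define S where "S i = {\<omega>\<in>B. \<xi> s \<omega> \<in> W i}" for i
  define G where "G i = {\<omega>\<in>S i. \<xi> u \<omega> \<in> {y. c' + \<epsilon> \<le> dist y (d i)}}" for i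
  have S: "S i \<in> sets (F s)" for i
    unfolding S_def using st by (intro sets_Collect_\<xi>_F[OF B] W(3)) auto
  have near: "dist (\<xi> s \<omega>) (d i) < \<epsilon>" if "\<omega> \<in> S i" for i \<omega>
    using that W(4)[of i] by (auto simp: S_def dist_commute)
  have G: "G i \<in> sets M" for i
  proof -
    have "S i \<in> sets (F u)" using S sets_F_mono[of s u] st by auto
    then have "G i \<in> sets (F u)"
      unfolding G_def using st
      by (intro sets_Collect_\<xi>_F borel_closed closed_Collect_le continuous_intros) auto
    then show ?thesis by (rule sets_F_subset)
  qed
  have "{\<omega>\<in>B. c \<le> dist (\<xi> u \<omega>) (\<xi> s \<omega>)} \<subseteq> (\<Union>i. G i)"
  proof
    fix \<omega> assume \<omega>: "\<omega> \<in> {\<omega>\<in>B. c \<le> dist (\<xi> u \<omega>) (\<xi> s \<omega>)}"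
    obtain i where "\<xi> s \<omega> \<in> W i" using W(2) by blast
    with \<omega> have "\<omega> \<in> S i" by (simp add: S_def)
    then have "dist (\<xi> s \<omega>) (d i) < \<epsilon>" by (rule near)
    moreover have "c \<le> dist (\<xi> u \<omega>) (\<xi> s \<omega>)" using \<omega> by simp
    ultimately have "c' + \<epsilon> \<le> dist (\<xi> u \<omega>) (d i)"
      using dist_triangle2[of "\<xi> u \<omega>" "\<xi> s \<omega>" "d i"] unfolding \<epsilon>_def by argo
    with \<open>\<omega> \<in> S i\<close> show "\<omega> \<in> (\<Union>i. G i)" by (auto simp: G_def)
  qed
  then have "emeasure M {\<omega>\<in>B. c \<le> dist (\<xi> u \<omega>) (\<xi> s \<omega>)} \<le> emeasure M (\<Union>i. G i)"
    using G by (intro emeasure_mono) auto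
  also have "\<dots> \<le> (\<Sum>i. emeasure M (G i))"
    using G by (intro emeasure_subadditive_countably) auto
  also have "\<dots> \<le> (\<Sum>i. ennreal \<alpha> * emeasure M (S i))"
    unfolding G_def using S near st \<alpha> by (intro suminf_le summableI emeasure_leave_ball_le)
  also have "\<dots> = ennreal \<alpha> * (\<Sum>i. emeasure M (S i))"
    by (rule ennreal_suminf_cmult)
  also have "(\<Sum>i. emeasure M (S i)) = emeasure M (\<Union>i. S i)"
    using W(1) sets_F_subset[OF S] by (intro suminf_emeasure) (auto simp: disjoint_family_on_def S_def)
  also have "(\<Union>i. S i) = B" using W(2) by (auto simp: S_def)
  finally have "ennreal (measure M {\<omega>\<in>B. c \<le> dist (\<xi> u \<omega>) (\<xi> s \<omega>)}) \<le> ennreal (\<alpha> * measure M B)"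
    by (simp add: emeasure_eq_measure ennreal_mult \<open>0 \<le> \<alpha>\<close>)
  then show ?thesis
    using \<open>0 \<le> \<alpha>\<close> by simp
qed

abbreviation sampled :: "nat \<Rightarrow> 'b \<Rightarrow> nat \<Rightarrow> 'a" where
  "sampled N \<omega> \<equiv> \<lambda>j. \<xi> (grid T N j) \<omega>"

lemma measurable_sampled: "l \<le> j \<Longrightarrow> j \<le> N \<Longrightarrow> \<xi> (grid T N l) \<in> borel_measurable (F (grid T N j))"
  using T_pos by (intro measurable_\<xi>_F grid_nonneg grid_mono grid_le order_trans[OF grid_mono grid_le]) auto

lemma sets_first_exit_eq:
  assumes ij: "i < j" "j \<le> N"
  shows "{\<omega>\<in>space M. first_exit (sampled N \<omega>) N b i = j} \<in> sets (F (grid T N j))"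
proof -
  have [measurable]: "\<xi> (grid T N l) \<in> borel_measurable (F (grid T N j))" if "l \<le> j" for l
    using that ij by (intro measurable_sampled) auto
  have "Measurable.pred (F (grid T N j)) (\<lambda>\<omega>. b \<le> dist (sampled N \<omega> j) (sampled N \<omega> i) \<and>
      (\<forall>l\<in>{i<..<j}. dist (sampled N \<omega> l) (sampled N \<omega> i) < b))"
    using ij by (intro pred_intros_logic pred_intros_finite) auto
  moreover have "{\<omega>\<in>space M. first_exit (sampled N \<omega>) N b i = j} =
      {\<omega>\<in>space M. b \<le> dist (sampled N \<omega> j) (sampled N \<omega> i) \<and>
        (\<forall>l\<in>{i<..<j}. dist (sampled N \<omega> l) (sampled N \<omega> i) < b)}"
    by (intro Collect_cong conj_cong refl first_exit_eq_iff[OF ij])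
  ultimately show ?thesis by (simp add: pred_def)
qed

lemma sets_first_exit_restrict:
  assumes B: "B \<in> sets (F (grid T N i))" and ij: "i < j" "j \<le> N"
  shows "{\<omega>\<in>B. first_exit (sampled N \<omega>) N b i = j} \<in> sets (F (grid T N j))"
proof -
  have "B \<in> sets (F (grid T N j))"
    using B sets_F_mono[OF grid_mono[of T i j N]] T_pos ij by auto
  moreover have "{\<omega>\<in>B. first_exit (sampled N \<omega>) N b i = j}
      = B \<inter> {\<omega>\<in>space M. first_exit (sampled N \<omega>) N b i = j}"
    using sets.sets_into_space[OF B] by auto
  ultimately show ?thesis
    using sets_first_exit_eq[OF ij] by auto
qed

lemma sets_exit_index_eq:
  "j \<le> N \<Longrightarrow> {\<omega>\<in>space M. exit_index (sampled N \<omega>) N b k = j} \<in> sets (F (grid T N j))"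
proof (induction k arbitrary: j)
  case 0
  show ?case using sets.top[of "F 0"] by (cases "j = 0") auto
next
  case (Suc k)
  have "{\<omega>\<in>space M. exit_index (sampled N \<omega>) N b (Suc k) = j} =
      (\<Union>i<j. {\<omega>\<in>{\<omega>\<in>space M. exit_index (sampled N \<omega>) N b k = i}. first_exit (sampled N \<omega>) N b i = j})"
    using Suc.prems first_exit_le_imp_less by fastforce
  moreover have "{\<omega>\<in>{\<omega>\<in>space M. exit_index (sampled N \<omega>) N b k = i}. first_exit (sampled N \<omega>) N b i = j}
      \<in> sets (F (grid T N j))" if "i < j" for i
    using that Suc by (intro sets_first_exit_restrict Suc.IH) auto
  ultimately show ?case by auto
qed

lemma sum_measure_first_exit:
  assumes B: "B \<in> sets (F (grid T N i))" and J: "J \<subseteq> {i<..N}"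
  shows "(\<Sum>j\<in>J. measure M {\<omega>\<in>B. first_exit (sampled N \<omega>) N b i = j})
           = measure M {\<omega>\<in>B. first_exit (sampled N \<omega>) N b i \<in> J}"
proof -
  have "measure M (\<Union>j\<in>J. {\<omega>\<in>B. first_exit (sampled N \<omega>) N b i = j})
      = (\<Sum>j\<in>J. measure M {\<omega>\<in>B. first_exit (sampled N \<omega>) N b i = j})"
  proof (rule measure_finite_Union)
    show "finite J" using J by (rule finite_subset) simp
    show "(\<lambda>j. {\<omega>\<in>B. first_exit (sampled N \<omega>) N b i = j}) ` J \<subseteq> sets M"
      using J sets_F_subset[OF sets_first_exit_restrict[OF B]] by auto
  qed (auto simp: disjoint_family_on_def emeasure_eq_measure)
  moreover have "(\<Union>j\<in>J. {\<omega>\<in>B. first_exit (sampled N \<omega>) N b i = j})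
      = {\<omega>\<in>B. first_exit (sampled N \<omega>) N b i \<in> J}" by auto
  ultimately show ?thesis by simp
qed

text \<open>Ottaviani's maximal inequality on the grid: if the sampled path leaves the b-ball
  around its value at time i before time m, then either the increment from i to m or the
  increment from the exit time to m has size at least c, and the Markov property at the
  (discrete) exit time bounds the latter.\<close>
lemma measure_first_exit_le_ottaviani:
  assumes B: "B \<in> sets (F (grid T N i))" and m: "i \<le> m" "m \<le> N" "grid T N m - grid T N i \<le> h"
    and c: "2 * c \<le> b" "0 < c'" "c' < c" and \<alpha>: "alpha T P h c' \<le> \<alpha>"
  shows "measure M {\<omega>\<in>B. first_exit (sampled N \<omega>) N b i \<le> m}
           \<le> \<alpha> * measure M B + \<alpha> * measure M {\<omega>\<in>B. first_exit (sampled N \<omega>) N b i \<le> m}"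
proof -
  let ?\<tau> = "\<lambda>\<omega>. first_exit (sampled N \<omega>) N b i"
  define H where "H j = {\<omega>\<in>B. ?\<tau> \<omega> = j}" for j
  have HF: "H j \<in> sets (F (grid T N j))" if "j \<in> {i<..m}" for j
    using that m unfolding H_def by (intro sets_first_exit_restrict[OF B]) auto
  have "(\<Sum>j\<in>{i<..m}. measure M (H j)) = measure M {\<omega>\<in>B. ?\<tau> \<omega> \<in> {i<..m}}"
    unfolding H_def using m by (intro sum_measure_first_exit[OF B]) auto
  moreover have "{\<omega>\<in>B. ?\<tau> \<omega> \<in> {i<..m}} = {\<omega>\<in>B. ?\<tau> \<omega> \<le> m}"
    using m less_first_exit[of i N] by force
  ultimately have exit_eq: "measure M {\<omega>\<in>B. ?\<tau> \<omega> \<le> m} = (\<Sum>j\<in>{i<..m}. measure M (H j))"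
    by simp
  have g: "0 \<le> grid T N i" "grid T N i \<le> grid T N j" "grid T N j \<le> grid T N m" "grid T N m \<le> T"
    if "i \<le> j" "j \<le> m" for j
    using that m T_pos by (auto intro: grid_nonneg grid_mono grid_le)
  define E0 where "E0 = {\<omega>\<in>B. c \<le> dist (\<xi> (grid T N m) \<omega>) (\<xi> (grid T N i) \<omega>)}"
  define E where "E j = {\<omega>\<in>H j. c \<le> dist (\<xi> (grid T N m) \<omega>) (\<xi> (grid T N j) \<omega>)}" for j
  have E0_le: "measure M E0 \<le> \<alpha> * measure M B"
    unfolding E0_def using g[of i] m c \<alpha> by (intro measure_displacement_le[OF B]) auto
  have E_le: "measure M (E j) \<le> \<alpha> * measure M (H j)" if "j \<in> {i<..m}" for j
    unfolding E_def using g[of j] that m c \<alpha> by (intro measure_displacement_le[OF HF[OF that]]) auto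
  have E0_sets: "E0 \<in> sets M"
    unfolding E0_def using g[of i] m sets_F_subset[OF B] by (intro sets_Collect_dist_ge) auto
  have E_sets: "E j \<in> sets M" if "j \<in> {i<..m}" for j
    unfolding E_def using g[of j] that sets_F_subset[OF HF[OF that]] by (intro sets_Collect_dist_ge) auto
  have "{\<omega>\<in>B. ?\<tau> \<omega> \<le> m} \<subseteq> E0 \<union> (\<Union>j\<in>{i<..m}. E j)"
  proof
    fix \<omega> assume \<omega>: "\<omega> \<in> {\<omega>\<in>B. ?\<tau> \<omega> \<le> m}"
    then have j: "?\<tau> \<omega> \<in> {i<..m}" using m less_first_exit[of i N] by force
    then have "b \<le> dist (\<xi> (grid T N (?\<tau> \<omega>)) \<omega>) (\<xi> (grid T N i) \<omega>)"
      using first_exit_eq_iff[of i "?\<tau> \<omega>" N "sampled N \<omega>" b] m by auto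
    with c dist_triangle3[of "\<xi> (grid T N (?\<tau> \<omega>)) \<omega>" "\<xi> (grid T N i) \<omega>" "\<xi> (grid T N m) \<omega>"]
    have "c \<le> dist (\<xi> (grid T N m) \<omega>) (\<xi> (grid T N (?\<tau> \<omega>)) \<omega>) \<or> c \<le> dist (\<xi> (grid T N m) \<omega>) (\<xi> (grid T N i) \<omega>)"
      by linarith
    with \<omega> j show "\<omega> \<in> E0 \<union> (\<Union>j\<in>{i<..m}. E j)"
      by (auto simp: E0_def E_def H_def)
  qed
  then have "measure M {\<omega>\<in>B. ?\<tau> \<omega> \<le> m} \<le> measure M (E0 \<union> (\<Union>j\<in>{i<..m}. E j))"
    using E0_sets E_sets by (intro finite_measure_mono) auto
  also have "\<dots> \<le> measure M E0 + measure M (\<Union>j\<in>{i<..m}. E j)"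
    using E0_sets E_sets by (intro measure_Un_le) auto
  also have "\<dots> \<le> measure M E0 + (\<Sum>j\<in>{i<..m}. measure M (E j))"
    using E_sets by (intro add_left_mono measure_UNION_le) auto
  also have "\<dots> \<le> \<alpha> * measure M B + \<alpha> * measure M {\<omega>\<in>B. ?\<tau> \<omega> \<le> m}"
    unfolding exit_eq sum_distrib_left using E0_le E_le by (intro add_mono sum_mono) auto
  finally show ?thesis .
qed

lemma sum_measure_first_exit_within_le:
  assumes B: "B \<in> sets (F (grid T N i))" and i: "i \<le> N" and h: "0 \<le> h"
    and c: "2 * c \<le> b" "0 < c'" "c' < c" and \<alpha>: "alpha T P h c' \<le> \<alpha>" "\<alpha> < 1"
  shows "(\<Sum>j\<in>{j\<in>{i<..N}. grid T N j - grid T N i \<le> h}. measure M {\<omega>\<in>B. first_exit (sampled N \<omega>) N b i = j})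
           \<le> \<alpha> / (1 - \<alpha>) * measure M B"
proof -
  let ?\<tau> = "\<lambda>\<omega>. first_exit (sampled N \<omega>) N b i"
  define L where "L = {j\<in>{i..N}. grid T N j - grid T N i \<le> h}"
  define m where "m = Max L"
  have "finite L" "i \<in> L" using i h by (auto simp: L_def)
  then have m: "m \<in> L" "\<And>j. j \<in> L \<Longrightarrow> j \<le> m"
    unfolding m_def by (auto intro: Max_in Max_ge)
  then have mN: "i \<le> m" "m \<le> N" "grid T N m - grid T N i \<le> h" by (auto simp: L_def)
  have J: "{j\<in>{i<..N}. grid T N j - grid T N i \<le> h} = {i<..m}"
    using m T_pos grid_mono[of T _ m N] by (fastforce simp: L_def)
  have "(\<Sum>j\<in>{j\<in>{i<..N}. grid T N j - grid T N i \<le> h}. measure M {\<omega>\<in>B. ?\<tau> \<omega> = j})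
      = measure M {\<omega>\<in>B. ?\<tau> \<omega> \<in> {i<..m}}"
    unfolding J by (rule sum_measure_first_exit[OF B]) (use mN in auto)
  also have "{\<omega>\<in>B. ?\<tau> \<omega> \<in> {i<..m}} = {\<omega>\<in>B. ?\<tau> \<omega> \<le> m}"
    using i less_first_exit[of i N] by force
  finally have "(\<Sum>j\<in>{j\<in>{i<..N}. grid T N j - grid T N i \<le> h}. measure M {\<omega>\<in>B. ?\<tau> \<omega> = j})
      = measure M {\<omega>\<in>B. ?\<tau> \<omega> \<le> m}" .
  moreover have "measure M {\<omega>\<in>B. ?\<tau> \<omega> \<le> m} * (1 - \<alpha>) \<le> \<alpha> * measure M B"
    using measure_first_exit_le_ottaviani[OF B mN c \<alpha>(1)] by (simp add: algebra_simps)
  ultimately show ?thesis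
    using \<alpha>(2) by (simp add: field_simps)
qed

lemma sum_measure_first_exit_le:
  assumes B: "B \<in> sets (F (grid T N i))"
  shows "(\<Sum>j\<in>{i<..N}. measure M {\<omega>\<in>B. first_exit (sampled N \<omega>) N b i = j}) \<le> measure M B"
  unfolding sum_measure_first_exit[OF B order_refl]
  using sets_F_subset[OF B] by (intro finite_measure_mono) auto

text \<open>On the event that no exit occurs up to N the discount factor is taken to be 0.\<close>
definition exit_laplace_le :: "nat \<Rightarrow> real \<Rightarrow> real \<Rightarrow> bool" where
  "exit_laplace_le N b q \<longleftrightarrow> (\<forall>i B. i \<le> N \<longrightarrow> B \<in> sets (F (grid T N i)) \<longrightarrow>
     (\<Sum>j\<in>{i<..N}. exp (- (grid T N j - grid T N i)) * measure M {\<omega>\<in>B. first_exit (sampled N \<omega>) N b i = j})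
       \<le> q * measure M B)"

lemma exit_laplace_le_staircase:
  assumes c: "2 * c \<le> b" "0 < c'" "c' < c" and h: "h 0 = 0" "mono h"
    and \<alpha>: "\<And>l. l < n \<Longrightarrow> alpha T P (h (Suc l)) c' \<le> \<alpha> (Suc l)" "\<And>l. l < n \<Longrightarrow> \<alpha> (Suc l) < 1"
  shows "exit_laplace_le N b (staircase_bound n h \<alpha>)"
  unfolding exit_laplace_le_def
proof (intro allI impI)
  fix i B assume i: "i \<le> N" and B: "B \<in> sets (F (grid T N i))"
  let ?\<mu> = "\<lambda>j. measure M {\<omega>\<in>B. first_exit (sampled N \<omega>) N b i = j}"
  let ?\<sigma> = "\<lambda>j. grid T N j - grid T N i"
  let ?w = "\<lambda>l. exp (- h l) - exp (- h (Suc l))"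
  have w: "0 \<le> ?w l" for l using monoD[OF h(2), of l "Suc l"] by simp
  have "(\<Sum>j\<in>{i<..N}. exp (- ?\<sigma> j) * ?\<mu> j)
      \<le> (\<Sum>j\<in>{i<..N}. (exp (- h n) + (\<Sum>l<n. ?w l * of_bool (?\<sigma> j \<le> h (Suc l)))) * ?\<mu> j)"
    using T_pos by (intro sum_mono mult_right_mono exp_neg_le_staircase h grid_diff_nonneg) auto
  also have "\<dots> = exp (- h n) * (\<Sum>j\<in>{i<..N}. ?\<mu> j)
      + (\<Sum>j\<in>{i<..N}. \<Sum>l<n. ?w l * (of_bool (?\<sigma> j \<le> h (Suc l)) * ?\<mu> j))"
    by (simp add: algebra_simps sum.distrib sum_distrib_left sum_distrib_right)
  also have "\<dots> = exp (- h n) * (\<Sum>j\<in>{i<..N}. ?\<mu> j)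
      + (\<Sum>l<n. ?w l * (\<Sum>j\<in>{j\<in>{i<..N}. ?\<sigma> j \<le> h (Suc l)}. ?\<mu> j))"
    by (subst sum.swap) (simp add: sum_distrib_left[symmetric] Int_def)
  also have "\<dots> \<le> exp (- h n) * measure M B + (\<Sum>l<n. ?w l * (\<alpha> (Suc l) / (1 - \<alpha> (Suc l)) * measure M B))"
  proof (intro add_mono mult_left_mono sum_mono sum_measure_first_exit_le[OF B] w)
    fix l assume "l \<in> {..<n}"
    moreover have "0 \<le> h (Suc l)" using monoD[OF h(2), of 0 "Suc l"] h(1) by simp
    ultimately show "(\<Sum>j\<in>{j\<in>{i<..N}. ?\<sigma> j \<le> h (Suc l)}. ?\<mu> j) \<le> \<alpha> (Suc l) / (1 - \<alpha> (Suc l)) * measure M B"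
      using \<alpha> by (intro sum_measure_first_exit_within_le[OF B i _ c]) auto
  qed simp
  also have "\<dots> = staircase_bound n h \<alpha> * measure M B"
    unfolding staircase_bound_def by (simp add: distrib_right sum_distrib_right mult.assoc)
  finally show "(\<Sum>j\<in>{i<..N}. exp (- ?\<sigma> j) * ?\<mu> j) \<le> staircase_bound n h \<alpha> * measure M B" .
qed

lemma exit_laplace_leD:
  "exit_laplace_le N b q \<Longrightarrow> i \<le> N \<Longrightarrow> B \<in> sets (F (grid T N i)) \<Longrightarrow>
    (\<Sum>j\<in>{i<..N}. exp (- (grid T N j - grid T N i)) * measure M {\<omega>\<in>B. first_exit (sampled N \<omega>) N b i = j})
      \<le> q * measure M B"
  unfolding exit_laplace_le_def by blast

lemma exit_laplace_le_nonneg: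
  assumes "exit_laplace_le N b q"
  shows "0 \<le> q"
proof -
  have "0 \<le> (\<Sum>j\<in>{0<..N}. exp (- (grid T N j - grid T N 0)) *
      measure M {\<omega>\<in>space M. first_exit (sampled N \<omega>) N b 0 = j})"
    by (intro sum_nonneg mult_nonneg_nonneg) auto
  also have "\<dots> \<le> q"
    using exit_laplace_leD[OF assms, of 0 "space M"] sets.top[of "F 0"] by (simp add: prob_space)
  finally show ?thesis .
qed

lemma measure_exit_index_Suc:
  assumes j: "j \<le> N"
  shows "measure M {\<omega>\<in>space M. exit_index (sampled N \<omega>) N b (Suc k) = j} =
    (\<Sum>i<j. measure M {\<omega>\<in>{\<omega>\<in>space M. exit_index (sampled N \<omega>) N b k = i}. first_exit (sampled N \<omega>) N b i = j})"
proof -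
  let ?E = "\<lambda>i. {\<omega>\<in>{\<omega>\<in>space M. exit_index (sampled N \<omega>) N b k = i}. first_exit (sampled N \<omega>) N b i = j}"
  have "{\<omega>\<in>space M. exit_index (sampled N \<omega>) N b (Suc k) = j} = (\<Union>i<j. ?E i)"
    using j first_exit_le_imp_less by fastforce
  moreover have "measure M (\<Union>i<j. ?E i) = (\<Sum>i<j. measure M (?E i))"
  proof (rule measure_finite_Union)
    show "?E ` {..<j} \<subseteq> sets M"
      using j sets_F_subset[OF sets_first_exit_restrict[OF sets_exit_index_eq]] by auto
  qed (auto simp: disjoint_family_on_def emeasure_eq_measure)
  ultimately show ?thesis by simp
qed

text \<open>Condition on the previous exit index and apply the Laplace bound from there.\<close>
lemma discounted_exit_index_le:
  assumes q: "exit_laplace_le N b q"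
  shows "(\<Sum>i\<le>N. exp (- grid T N i) * measure M {\<omega>\<in>space M. exit_index (sampled N \<omega>) N b k = i}) \<le> q ^ k"
proof (induction k)
  case 0
  have "(\<Sum>i\<le>N. exp (- grid T N i) * measure M {\<omega>\<in>space M. exit_index (sampled N \<omega>) N b 0 = i})
      = (\<Sum>i\<le>N. of_bool (i = 0))"
    by (intro sum.cong) (auto simp: prob_space)
  then show ?case by simp
next
  case (Suc k)
  let ?g = "grid T N"
  let ?B = "\<lambda>i. {\<omega>\<in>space M. exit_index (sampled N \<omega>) N b k = i}"
  let ?H = "\<lambda>i j. measure M {\<omega>\<in>?B i. first_exit (sampled N \<omega>) N b i = j}"
  have "0 \<le> q" using q by (rule exit_laplace_le_nonneg)
  have "(\<Sum>j\<le>N. exp (- ?g j) * measure M {\<omega>\<in>space M. exit_index (sampled N \<omega>) N b (Suc k) = j})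
      = (\<Sum>j\<le>N. \<Sum>i<j. exp (- ?g j) * ?H i j)"
    by (intro sum.cong refl) (simp del: exit_index.simps add: measure_exit_index_Suc sum_distrib_left)
  also have "\<dots> = (\<Sum>i<N. \<Sum>j\<in>{Suc i..N}. exp (- ?g j) * ?H i j)"
    by (rule sum.nested_swap')
  also have "\<dots> = (\<Sum>i<N. exp (- ?g i) * (\<Sum>j\<in>{i<..N}. exp (- (?g j - ?g i)) * ?H i j))"
  proof (intro sum.cong)
    fix i
    have "exp (- ?g i) * exp (- (?g j - ?g i)) = exp (- ?g j)" for j
      by (simp add: exp_add[symmetric])
    moreover have "{Suc i..N} = {i<..N}" by auto
    ultimately show "(\<Sum>j\<in>{Suc i..N}. exp (- ?g j) * ?H i j)
        = exp (- ?g i) * (\<Sum>j\<in>{i<..N}. exp (- (?g j - ?g i)) * ?H i j)"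
      by (simp add: sum_distrib_left mult.assoc[symmetric])
  qed simp
  also have "\<dots> \<le> (\<Sum>i<N. exp (- ?g i) * (q * measure M (?B i)))"
    by (intro sum_mono mult_left_mono exit_laplace_leD[OF q] sets_exit_index_eq) auto
  also have "\<dots> \<le> (\<Sum>i\<le>N. exp (- ?g i) * (q * measure M (?B i)))"
    using \<open>0 \<le> q\<close> by (intro sum_mono2) auto
  also have "\<dots> = q * (\<Sum>i\<le>N. exp (- ?g i) * measure M (?B i))"
    by (simp add: sum_distrib_left algebra_simps)
  also have "\<dots> \<le> q * q ^ k"
    using Suc \<open>0 \<le> q\<close> by (rule mult_left_mono)
  finally show ?case by simp
qed

lemma sets_exit_index_le: "{\<omega>\<in>space M. exit_index (sampled N \<omega>) N b k \<le> N} \<in> sets M"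
proof -
  have "{\<omega>\<in>space M. exit_index (sampled N \<omega>) N b k \<le> N} = (\<Union>i\<le>N. {\<omega>\<in>space M. exit_index (sampled N \<omega>) N b k = i})"
    by auto
  then show ?thesis
    using sets_F_subset[OF sets_exit_index_eq] by auto
qed

lemma measure_exit_index_le:
  assumes q: "exit_laplace_le N b q"
  shows "measure M {\<omega>\<in>space M. exit_index (sampled N \<omega>) N b k \<le> N} \<le> exp T * q ^ k"
proof -
  let ?B = "\<lambda>i. {\<omega>\<in>space M. exit_index (sampled N \<omega>) N b k = i}"
  have "measure M {\<omega>\<in>space M. exit_index (sampled N \<omega>) N b k \<le> N} = measure M (\<Union>i\<le>N. ?B i)"
    by (rule arg_cong[where f = "measure M"]) auto
  also have "\<dots> = (\<Sum>i\<le>N. measure M (?B i))"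
    using sets_F_subset[OF sets_exit_index_eq]
    by (intro measure_finite_Union) (auto simp: disjoint_family_on_def emeasure_eq_measure)
  also have "\<dots> \<le> (\<Sum>i\<le>N. exp T * (exp (- grid T N i) * measure M (?B i)))"
  proof (intro sum_mono)
    fix i assume "i \<in> {..N}"
    then have "1 \<le> exp T * exp (- grid T N i)"
      using grid_le[of T i N] T_pos by (simp add: exp_add[symmetric])
    from mult_right_mono[OF this measure_nonneg[of M "?B i"]]
    show "measure M (?B i) \<le> exp T * (exp (- grid T N i) * measure M (?B i))"
      by (simp add: mult.assoc)
  qed
  also have "\<dots> \<le> exp T * q ^ k"
    unfolding sum_distrib_left[symmetric] by (intro mult_left_mono discounted_exit_index_le q) simp
  finally show ?thesis .
qed

lemma exit_count_eq_sum_indicator: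
  "\<omega> \<in> space M \<Longrightarrow> (of_nat (card {l\<in>{1..N}. exit_index (sampled N \<omega>) N b l \<le> N}) :: ennreal)
    = (\<Sum>l\<in>{1..N}. indicator {\<omega>\<in>space M. exit_index (sampled N \<omega>) N b l \<le> N} \<omega>)"
  by (simp add: indicator_def of_bool_def[symmetric] Int_def)

lemma borel_measurable_exit_count:
  "(\<lambda>\<omega>. of_nat (card {l\<in>{1..N}. exit_index (sampled N \<omega>) N b l \<le> N}) :: ennreal) \<in> borel_measurable M"
  using sets_exit_index_le
  by (subst measurable_cong[OF exit_count_eq_sum_indicator]) (auto intro!: borel_measurable_sum)

lemma nn_integral_exit_count_le:
  assumes q: "exit_laplace_le N b q" "q < 1"
  shows "(\<integral>\<^sup>+\<omega>. of_nat (card {l\<in>{1..N}. exit_index (sampled N \<omega>) N b l \<le> N}) \<partial>M)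
           \<le> ennreal (exp T * (q / (1 - q)))"
proof -
  have "0 \<le> q" using q(1) by (rule exit_laplace_le_nonneg)
  have "(\<integral>\<^sup>+\<omega>. of_nat (card {l\<in>{1..N}. exit_index (sampled N \<omega>) N b l \<le> N}) \<partial>M)
      = (\<Sum>l\<in>{1..N}. emeasure M {\<omega>\<in>space M. exit_index (sampled N \<omega>) N b l \<le> N})"
    using sets_exit_index_le
    by (simp only: nn_integral_cong[OF exit_count_eq_sum_indicator] nn_integral_sum
        borel_measurable_indicator nn_integral_indicator)
  also have "\<dots> = ennreal (\<Sum>l\<in>{1..N}. measure M {\<omega>\<in>space M. exit_index (sampled N \<omega>) N b l \<le> N})"
    by (simp add: emeasure_eq_measure)
  also have "\<dots> \<le> ennreal (exp T * (\<Sum>l\<in>{1..N}. q ^ l))"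
    unfolding sum_distrib_left by (intro ennreal_leI sum_mono measure_exit_index_le q)
  also have "\<dots> \<le> ennreal (exp T * (q / (1 - q)))"
    using sum_power_atLeast1_le[OF \<open>0 \<le> q\<close> q(2)] by (intro ennreal_leI mult_left_mono) auto
  finally show ?thesis .
qed

lemma nn_integral_Y_le:
  assumes rc: "\<And>\<omega> s. \<omega> \<in> space M \<Longrightarrow> 0 \<le> s \<Longrightarrow> s < T \<Longrightarrow> continuous (at_right s) (\<lambda>s. \<xi> s \<omega>)"
    and b: "0 < b" "2 * b < Mr r" and q: "\<And>N. exit_laplace_le N b q" "q < 1"
  shows "(\<integral>\<^sup>+\<omega>. Y T \<xi> r \<omega> \<partial>M) \<le> ennreal (exp T * (q / (1 - q)))"
proof -
  define u where "u N \<omega> = (of_nat (card {l\<in>{1..N}. exit_index (sampled N \<omega>) N b l \<le> N}) :: ennreal)" for N \<omega>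
  have "Y T \<xi> r \<omega> \<le> liminf (\<lambda>N. u N \<omega>)" if "\<omega> \<in> space M" for \<omega>
    unfolding Y_def
  proof (rule SUP_least)
    fix \<kappa> assume "\<kappa> \<in> partitions T"
    have "eventually (\<lambda>N. card (Kset \<xi> r \<omega> \<kappa>) \<le>
        card {l \<in> {1..N}. exit_index (sampled N \<omega>) N b l \<le> N}) sequentially"
      using T_pos rc[OF that] b \<open>\<kappa> \<in> partitions T\<close> by (rule eventually_card_Kset_le_exit_count)
    then show "of_nat (card (Kset \<xi> r \<omega> \<kappa>)) \<le> liminf (\<lambda>N. u N \<omega>)"
      by (intro Liminf_bounded) (auto simp: u_def elim: eventually_mono)
  qed
  then have "(\<integral>\<^sup>+\<omega>. Y T \<xi> r \<omega> \<partial>M) \<le> (\<integral>\<^sup>+\<omega>. liminf (\<lambda>N. u N \<omega>) \<partial>M)"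
    by (intro nn_integral_mono) auto
  also have "\<dots> \<le> liminf (\<lambda>N. \<integral>\<^sup>+\<omega>. u N \<omega> \<partial>M)"
    unfolding u_def by (intro nn_integral_liminf borel_measurable_exit_count)
  also have "\<dots> \<le> limsup (\<lambda>N. \<integral>\<^sup>+\<omega>. u N \<omega> \<partial>M)"
    by (rule Liminf_le_Limsup) simp
  also have "\<dots> \<le> ennreal (exp T * (q / (1 - q)))"
    unfolding u_def using q by (intro Limsup_bounded always_eventually allI nn_integral_exit_count_le)
  finally show ?thesis .
qed

lemma nn_integral_Y_le_staircase:
  assumes rc: "\<And>\<omega> s. \<omega> \<in> space M \<Longrightarrow> 0 \<le> s \<Longrightarrow> s < T \<Longrightarrow> continuous (at_right s) (\<lambda>s. \<xi> s \<omega>)"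
    and c: "0 < c'" "c' < c" "4 * c < Mr r" and h: "h 0 = 0" "mono h"
    and \<alpha>: "\<And>l. l < n \<Longrightarrow> alpha T P (h (Suc l)) c' \<le> \<alpha> (Suc l)" "\<And>l. l < n \<Longrightarrow> \<alpha> (Suc l) < 1"
    and q: "staircase_bound n h \<alpha> < 1"
  shows "(\<integral>\<^sup>+\<omega>. Y T \<xi> r \<omega> \<partial>M) \<le> ennreal (exp T * (staircase_bound n h \<alpha> / (1 - staircase_bound n h \<alpha>)))"
proof (rule nn_integral_Y_le[OF rc _ _ _ q])
  show "0 < 2 * c" "2 * (2 * c) < Mr r" using c by auto
  show "exit_laplace_le N (2 * c) (staircase_bound n h \<alpha>)" for N
    using c by (intro exit_laplace_le_staircase[OF _ _ _ h \<alpha>]) auto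
qed

lemma nn_integral_Y_le_of_alpha_linear:
  assumes rc: "\<And>\<omega> s. \<omega> \<in> space M \<Longrightarrow> 0 \<le> s \<Longrightarrow> s < T \<Longrightarrow> continuous (at_right s) (\<lambda>s. \<xi> s \<omega>)"
    and c: "0 < c'" "c' < c" "4 * c < Mr r" and \<delta>: "0 < \<delta>" "\<delta> \<le> 1"
    and \<alpha>: "\<And>h. 0 \<le> h \<Longrightarrow> h \<le> \<delta> \<Longrightarrow> alpha T P h c' \<le> 21 / 40 * (h / \<delta>)"
  shows "(\<integral>\<^sup>+\<omega>. Y T \<xi> r \<omega> \<partial>M) \<le> ennreal (4 / \<delta> * exp T)"
    and "\<delta> = 1 \<Longrightarrow> (\<integral>\<^sup>+\<omega>. Y T \<xi> r \<omega> \<partial>M) \<le> ennreal (195 / 100 * exp T)"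
proof -
  let ?q = "staircase_bound 1 (\<lambda>l. real l * \<delta> / 2) (\<lambda>_. 21 / 80)"
  have "(\<integral>\<^sup>+\<omega>. Y T \<xi> r \<omega> \<partial>M) \<le> ennreal (exp T * (?q / (1 - ?q)))"
    using \<delta> \<alpha>[of "\<delta> / 2"] staircase_bound_one_level[OF \<delta>]
    by (intro nn_integral_Y_le_staircase[OF rc c]) (auto simp: mono_def)
  also have "\<dots> \<le> ennreal (4 / \<delta> * exp T)"
    using mult_right_mono[OF staircase_bound_one_level(2)[OF \<delta>] exp_ge_zero, of T]
    by (intro ennreal_leI) (simp add: mult.commute)
  finally show "(\<integral>\<^sup>+\<omega>. Y T \<xi> r \<omega> \<partial>M) \<le> ennreal (4 / \<delta> * exp T)" .
next
  assume "\<delta> = 1"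
  let ?q = "staircase_bound 3 (\<lambda>l. real l / 4) (\<lambda>l. 21 * real l / 160)"
  have "alpha T P (real (Suc l) / 4) c' \<le> 21 * real (Suc l) / 160" if "l < 3" for l
    using \<alpha>[of "real (Suc l) / 4"] that \<open>\<delta> = 1\<close> by simp
  then have "(\<integral>\<^sup>+\<omega>. Y T \<xi> r \<omega> \<partial>M) \<le> ennreal (exp T * (?q / (1 - ?q)))"
    using staircase_bound_three_levels
    by (intro nn_integral_Y_le_staircase[OF rc c]) (auto simp: mono_def)
  also have "\<dots> \<le> ennreal (195 / 100 * exp T)"
    using mult_right_mono[OF staircase_bound_three_levels(2) exp_ge_zero, of T]
    by (intro ennreal_leI) (simp add: mult.commute)
  finally show "(\<integral>\<^sup>+\<omega>. Y T \<xi> r \<omega> \<partial>M) \<le> ennreal (195 / 100 * exp T)" .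
qed

end

section \<open>The parameters of the theorem\<close>

lemma Mr_pos: "0 < Mr r"
  by (simp add: Mr_def)

lemma Mr_eq_4_Mr_add_2: "Mr r = 4 * Mr (r + 2)"
proof -
  have "- real_of_int r - 1 = 2 + (- real_of_int (r + 2) - 1)" by simp
  then have "Mr r = 2 powr 2 * Mr (r + 2)"
    unfolding Mr_def by (simp only: powr_add)
  then show ?thesis by simp
qed

lemma Mr_add_2_less:
  assumes a0: "0 < a0" and r: "\<lfloor>- (log 2 a0 + 3)\<rfloor> < r"
  shows "Mr (r + 2) < a0"
proof -
  have "- real_of_int (r + 2) - 1 < log 2 a0"
    using r by linarith
  then have "Mr (r + 2) < 2 powr (log 2 a0)"
    unfolding Mr_def by (intro powr_less_mono) auto
  with a0 show ?thesis by simp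
qed

lemma min_root_bounds:
  fixes K A \<beta> T :: real
  assumes "0 < K" "0 < A" "0 < \<beta>" "0 < T"
  defines "\<delta> \<equiv> min (min ((A / (2 * K)) powr (1 / \<beta>)) T) 1"
  shows "0 < \<delta>" "\<delta> \<le> 1" "\<delta> \<le> T" "K * \<delta> powr \<beta> \<le> A / 2"
proof -
  show "0 < \<delta>" "\<delta> \<le> 1" "\<delta> \<le> T"
    using assms by (simp_all add: \<delta>_def)
  then have "\<delta> powr \<beta> \<le> ((A / (2 * K)) powr (1 / \<beta>)) powr \<beta>"
    using assms by (intro powr_mono2) (auto simp: \<delta>_def)
  also have "\<dots> = A / (2 * K)"
    using assms by (simp add: powr_powr)
  finally show "K * \<delta> powr \<beta> \<le> A / 2"
    using assms by (simp add: field_simps)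
qed

lemma shrunk_radius:
  fixes a \<gamma> :: real
  assumes "0 < a" "0 < \<gamma>"
  shows "0 < a * (20 / 21) powr (1 / \<gamma>)" "a * (20 / 21) powr (1 / \<gamma>) < a"
    and "(a * (20 / 21) powr (1 / \<gamma>)) powr \<gamma> = a powr \<gamma> * (20 / 21)"
proof -
  have "(20 / 21 :: real) powr (1 / \<gamma>) < 1 powr (1 / \<gamma>)"
    using assms by (intro powr_less_mono2) auto
  then show "0 < a * (20 / 21) powr (1 / \<gamma>)" "a * (20 / 21) powr (1 / \<gamma>) < a"
    using assms by simp_all
  show "(a * (20 / 21) powr (1 / \<gamma>)) powr \<gamma> = a powr \<gamma> * (20 / 21)"
    using assms by (simp add: powr_mult powr_powr)
qed

lemma powr_le_linear:
  fixes h \<delta> \<beta> :: real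
  assumes "0 \<le> h" "h \<le> \<delta>" "0 < \<delta>" "1 \<le> \<beta>"
  shows "h powr \<beta> \<le> \<delta> powr \<beta> * (h / \<delta>)"
proof -
  have "h powr \<beta> = \<delta> powr \<beta> * (h / \<delta>) powr \<beta>"
    using assms by (simp add: powr_divide)
  also have "(h / \<delta>) powr \<beta> \<le> (h / \<delta>) powr 1"
    using assms by (intro powr_mono') auto
  finally show ?thesis
    using assms by (simp add: mult_left_mono)
qed

lemma alpha_le_linear_of_class_M:
  assumes cM: "class_M T P \<beta> \<gamma> a0 K" and \<beta>: "1 \<le> \<beta>" and K: "0 < K"
    and c': "0 < c'" "c' \<le> a0" "c' powr \<gamma> = a powr \<gamma> * (20 / 21)"
    and \<delta>: "0 < \<delta>" "\<delta> \<le> T" "K * \<delta> powr \<beta> \<le> a powr \<gamma> / 2" and h: "0 \<le> h" "h \<le> \<delta>"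
  shows "alpha T P h c' \<le> 21 / 40 * (h / \<delta>)"
proof -
  have "alpha T P h c' \<le> K * h powr \<beta> / c' powr \<gamma>"
    using cM c' h \<delta> unfolding class_M_def by auto
  also have "\<dots> \<le> K * (\<delta> powr \<beta> * (h / \<delta>)) / c' powr \<gamma>"
    using powr_le_linear[OF h \<delta>(1) \<beta>] K c' by (intro divide_right_mono mult_left_mono) auto
  also have "\<dots> \<le> a powr \<gamma> / 2 * (h / \<delta>) / c' powr \<gamma>"
    using mult_right_mono[OF \<delta>(3), of "h / \<delta>"] \<delta>(1) h
    by (intro divide_right_mono) (auto simp: mult.assoc)
  also have "\<dots> = 21 / 40 * (h / \<delta>)"
  proof -
    have "0 < c' powr \<gamma>" using c'(1) by simp
    then have "0 < a powr \<gamma>" using c'(3) by simp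
    then show ?thesis unfolding c'(3) by (simp add: field_simps)
  qed
  finally show ?thesis .
qed

theorem lemma3p1:
  fixes M :: "'b measure" and F :: "real \<Rightarrow> 'b measure"
    and \<xi> :: "real \<Rightarrow> 'b \<Rightarrow> 'a::polish_space"
    and P :: "real \<Rightarrow> real \<Rightarrow> 'a \<Rightarrow> 'a measure"
    and T \<beta> \<gamma> a0 K :: real and r :: int
  assumes "prob_space M"
    and "T > 0"
    and "strong_markov M F T \<xi> P"
    and "cadlag_paths M T \<xi>"
    and "\<beta> \<ge> 1" and "\<gamma> > 0" and "a0 > 0" and "K > 0"
    and "class_M T P \<beta> \<gamma> a0 K"
    and "r > \<lfloor>- (log 2 a0 + 3)\<rfloor>"
  defines "Tr \<equiv> min (min (((min (Mr (r + 2)) a0) powr \<gamma> / (2 * K)) powr (1 / \<beta>)) T) 1"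
  shows "(Tr < 1 \<longrightarrow> (\<integral>\<^sup>+ \<omega>. Y T \<xi> r \<omega> \<partial>M) \<le> ennreal (4 / Tr * exp T)) \<and>
         (Tr = 1 \<longrightarrow> (\<integral>\<^sup>+ \<omega>. Y T \<xi> r \<omega> \<partial>M) \<le> ennreal (195 / 100 * exp T))"
proof -
  interpret strong_markov_process M F \<xi> P T
    by (intro strong_markov_process.intro strong_markov_process_axioms.intro assms(1-3))
  define a where "a = Mr (r + 2)"
  have a: "0 < a" "a < a0" "Mr r = 4 * a"
    using Mr_pos[of "r + 2"] Mr_add_2_less[OF assms(7,10)] Mr_eq_4_Mr_add_2[of r] by (simp_all add: a_def)
  then have Tr_eq: "Tr = min (min ((a powr \<gamma> / (2 * K)) powr (1 / \<beta>)) T) 1"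
    by (simp add: Tr_def a_def)
  have "0 < a powr \<gamma>" "0 < \<beta>" using a assms(5) by simp_all
  note Tr = min_root_bounds[OF assms(8) this assms(2), folded Tr_eq]
  \<comment> \<open>The displacement bounds need the kernel estimate at a radius strictly below M_(r+2);
    shrinking it by (20/21)^(1/\<gamma>) costs only the factor 21/20.\<close>
  define c' where "c' = a * (20 / 21) powr (1 / \<gamma>)"
  note c' = shrunk_radius[OF a(1) assms(6), folded c'_def]
  have rc: "\<And>\<omega> s. \<omega> \<in> space M \<Longrightarrow> 0 \<le> s \<Longrightarrow> s < T \<Longrightarrow> continuous (at_right s) (\<lambda>s. \<xi> s \<omega>)"
    using assms(4) by (simp add: cadlag_paths_def)
  have "alpha T P h c' \<le> 21 / 40 * (h / Tr)" if "0 \<le> h" "h \<le> Tr" for h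
    using a c' Tr assms(2,5,8) that by (intro alpha_le_linear_of_class_M[OF assms(9)]) auto
  with nn_integral_Y_le_of_alpha_linear[OF rc, where c' = c' and c = "(c' + a) / 2" and \<delta> = Tr] Tr a c'
  show ?thesis by auto
qed

end
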